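(* Let $G_{K,N}$ be the graph with vertex set $\{u_{ij},b_{ij}: i\in[K], j\in[N]\}$ whose edges are exactly: $u_{ij}\sim u_{ik}$ for $j\ne k$; $b_{ij}\sim u_{ik}$ for all $j,k\in[N]$; and for each $i\in[N]$ and $j\ne k$ in $[K]$: $u_{ji}\sim u_{ki}$, $b_{ji}\sim b_{ki}$, $b_{ji}\sim u_{ki}$. For $i\in[K]$ let $U_i=\{u_{ij}:j\in[N]\}$ and $B_i=\{b_{ij}:j\in[N]\}$. Then for every $i\in[K]$, the induced subgraph $G_{K,N}\big((\bigcup_{j\in[K]}B_j)\cup U_i\big)$ is perfect.
   Context: A graph is perfect if in every induced subgraph the clique number equals the chromatic number. *)

theory Defs
  imports Main
begin

datatype vtx = U nat nat | B nat nat

definition GV :: "nat \<Rightarrow> nat \<Rightarrow> vtx set" where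
  "GV K N = {U i j | i j. i \<in> {1..K} \<and> j \<in> {1..N}} \<union> {B i j | i j. i \<in> {1..K} \<and> j \<in> {1..N}}"

definition gen_edge :: "nat \<Rightarrow> nat \<Rightarrow> vtx \<Rightarrow> vtx \<Rightarrow> bool" where
  "gen_edge K N x y \<longleftrightarrow>
     (\<exists>i\<in>{1..K}. \<exists>j\<in>{1..N}. \<exists>k\<in>{1..N}. j \<noteq> k \<and> x = U i j \<and> y = U i k) \<or>
     (\<exists>i\<in>{1..K}. \<exists>j\<in>{1..N}. \<exists>k\<in>{1..N}. x = B i j \<and> y = U i k) \<or>
     (\<exists>i\<in>{1..N}. \<exists>j\<in>{1..K}. \<exists>k\<in>{1..K}. j \<noteq> k \<and>
        ((x = U j i \<and> y = U k i) \<or> (x = B j i \<and> y = B k i) \<or> (x = B j i \<and> y = U k i)))"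

definition adj :: "nat \<Rightarrow> nat \<Rightarrow> vtx \<Rightarrow> vtx \<Rightarrow> bool" where
  "adj K N x y \<longleftrightarrow> gen_edge K N x y \<or> gen_edge K N y x"

definition Uset :: "nat \<Rightarrow> nat \<Rightarrow> vtx set" where
  "Uset N i = {U i j | j. j \<in> {1..N}}"

definition Bset :: "nat \<Rightarrow> nat \<Rightarrow> vtx set" where
  "Bset N i = {B i j | j. j \<in> {1..N}}"

definition is_clique :: "('a \<Rightarrow> 'a \<Rightarrow> bool) \<Rightarrow> 'a set \<Rightarrow> 'a set \<Rightarrow> bool" where
  "is_clique E S C \<longleftrightarrow> C \<subseteq> S \<and> (\<forall>x\<in>C. \<forall>y\<in>C. x \<noteq> y \<longrightarrow> E x y)"

definition clique_number :: "('a \<Rightarrow> 'a \<Rightarrow> bool) \<Rightarrow> 'a set \<Rightarrow> nat" where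
  "clique_number E S = Max {card C | C. is_clique E S C}"

definition proper_colouring :: "('a \<Rightarrow> 'a \<Rightarrow> bool) \<Rightarrow> 'a set \<Rightarrow> nat \<Rightarrow> ('a \<Rightarrow> nat) \<Rightarrow> bool" where
  "proper_colouring E S k f \<longleftrightarrow> (\<forall>x\<in>S. f x < k) \<and> (\<forall>x\<in>S. \<forall>y\<in>S. E x y \<longrightarrow> f x \<noteq> f y)"

definition chromatic_number :: "('a \<Rightarrow> 'a \<Rightarrow> bool) \<Rightarrow> 'a set \<Rightarrow> nat" where
  "chromatic_number E S = (LEAST k. \<exists>f. proper_colouring E S k f)"

definition perfect :: "('a \<Rightarrow> 'a \<Rightarrow> bool) \<Rightarrow> 'a set \<Rightarrow> bool" where
  "perfect E V \<longleftrightarrow> (\<forall>S. S \<subseteq> V \<longrightarrow> clique_number E S = chromatic_number E S)"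

end

theory Submission
  imports Defs
begin

text \<open>Every nonempty induced subgraph of the graph on \<open>\<Union>\<^sub>j B\<^sub>j \<union> U\<^sub>i\<close> has a simplicial vertex
  (one whose neighbourhood is a clique): a vertex \<open>b\<^sub>j\<^sub>c\<close> with \<open>j \<noteq> i\<close> only sees vertices of
  column \<open>c\<close>; failing that, a vertex \<open>b\<^sub>i\<^sub>c\<close> only sees the row \<open>U\<^sub>i\<close>; failing that, only the
  clique \<open>U\<^sub>i\<close> is left. Colouring greedily along such an elimination order never needs more
  colours than the clique number, so every induced subgraph is coloured optimally.\<close>

definition simplicial :: "('a \<Rightarrow> 'a \<Rightarrow> bool) \<Rightarrow> 'a set \<Rightarrow> 'a \<Rightarrow> bool" where
  "simplicial E S v \<longleftrightarrow> v \<in> S \<and>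
     (\<forall>x\<in>S. \<forall>y\<in>S. x \<noteq> v \<and> y \<noteq> v \<and> x \<noteq> y \<and> E v x \<and> E v y \<longrightarrow> E x y)"

lemma finite_clique_sizes:
  assumes "finite S"
  shows "finite {card C | C. is_clique E S C}"
proof -
  have "{card C | C. is_clique E S C} \<subseteq> card ` Pow S"
    by (auto simp: is_clique_def)
  then show ?thesis
    using assms finite_subset by blast
qed

lemma clique_number_attained:
  assumes "finite S"
  shows "\<exists>C. is_clique E S C \<and> card C = clique_number E S"
proof -
  have "is_clique E S {}"
    by (simp add: is_clique_def)
  then show ?thesis
    unfolding clique_number_def using Max_in[OF finite_clique_sizes[OF assms]] by fastforce
qed

lemma card_le_clique_number:
  assumes "finite S" "is_clique E S C"
  shows "card C \<le> clique_number E S"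
  unfolding clique_number_def using finite_clique_sizes[OF assms(1)] assms(2)
  by (intro Max_ge) auto

lemma clique_number_mono:
  assumes "finite S" "T \<subseteq> S"
  shows "clique_number E T \<le> clique_number E S"
proof -
  obtain C where "is_clique E T C" "card C = clique_number E T"
    using clique_number_attained assms finite_subset by metis
  moreover from this have "is_clique E S C"
    using assms(2) by (auto simp: is_clique_def)
  ultimately show ?thesis
    using card_le_clique_number[OF assms(1)] by metis
qed

lemma clique_number_le_colours:
  assumes "finite S" "proper_colouring E S k f"
  shows "clique_number E S \<le> k"
proof -
  obtain C where C: "is_clique E S C" "card C = clique_number E S"
    using clique_number_attained[OF assms(1)] by blast
  have "inj_on f C"
    using C(1) assms(2) unfolding inj_on_def is_clique_def proper_colouring_def by blast
  moreover have "f ` C \<subseteq> {..<k}"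
    using C(1) assms(2) unfolding is_clique_def proper_colouring_def by auto
  ultimately have "card C \<le> k"
    by (metis card_image card_lessThan card_mono finite_lessThan)
  with C show ?thesis by simp
qed

lemma simplicial_closed_neighbourhood_clique:
  assumes sym: "\<And>x y. E x y \<Longrightarrow> E y x" and "simplicial E S v"
  shows "is_clique E S (insert v {x\<in>S. x \<noteq> v \<and> E v x})"
  using assms unfolding simplicial_def is_clique_def by blast

lemma exists_unused_colour:
  assumes "finite A" "card A < m"
  shows "\<exists>c<m. c \<notin> f ` A"
proof (rule ccontr)
  assume "\<not> ?thesis"
  then have "{..<m} \<subseteq> f ` A" by auto
  then have "m \<le> card (f ` A)"
    using assms(1) by (metis card_lessThan card_mono finite_imageI)
  also have "\<dots> \<le> card A"
    using assms(1) card_image_le by blast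
  finally show False using assms(2) by simp
qed

lemma proper_colouring_extend_simplicial:
  assumes sym: "\<And>x y. E x y \<Longrightarrow> E y x" and irr: "\<not> E v v"
    and "finite A" and v: "simplicial E A v"
    and f: "proper_colouring E (A - {v}) k f" and k: "clique_number E A \<le> k"
  shows "\<exists>g. proper_colouring E A k g"
proof -
  define Nb where "Nb = {x\<in>A. x \<noteq> v \<and> E v x}"
  have "finite Nb" "v \<notin> Nb"
    using \<open>finite A\<close> by (auto simp: Nb_def)
  moreover have "card (insert v Nb) \<le> k"
    using card_le_clique_number[OF \<open>finite A\<close> simplicial_closed_neighbourhood_clique[OF sym v]] k
    unfolding Nb_def by linarith
  ultimately obtain c where c: "c < k" "c \<notin> f ` Nb"
    using exists_unused_colour[of Nb k f] by auto
  have "proper_colouring E A k (f(v := c))"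
    using f c irr sym unfolding proper_colouring_def Nb_def by auto
  then show ?thesis by blast
qed

lemma exists_colouring_clique_number:
  assumes sym: "\<And>x y. E x y \<Longrightarrow> E y x" and irr: "\<And>x. x \<in> S \<Longrightarrow> \<not> E x x"
    and "finite S"
    and simpl: "\<And>T. T \<subseteq> S \<Longrightarrow> T \<noteq> {} \<Longrightarrow> \<exists>v. simplicial E T v"
    and "T \<subseteq> S"
  shows "\<exists>f. proper_colouring E T (clique_number E T) f"
  using finite_subset[OF \<open>T \<subseteq> S\<close> \<open>finite S\<close>] \<open>T \<subseteq> S\<close>
proof (induction T rule: finite_remove_induct)
  case empty
  then show ?case by (simp add: proper_colouring_def)
next
  case (remove A)
  then obtain v where v: "simplicial E A v"
    using simpl by blast
  then have "v \<in> A" by (simp add: simplicial_def)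
  then obtain f where "proper_colouring E (A - {v}) (clique_number E (A - {v})) f"
    using remove by blast
  then have "proper_colouring E (A - {v}) (clique_number E A) f"
    using clique_number_mono[OF remove.hyps(1), of "A - {v}" E]
    unfolding proper_colouring_def by (meson Diff_subset order_less_le_trans)
  then show ?case
    using proper_colouring_extend_simplicial[OF sym _ remove.hyps(1) v] irr \<open>v \<in> A\<close> remove.prems
    by blast
qed

lemma perfect_if_simplicial_vertices:
  assumes sym: "\<And>x y. E x y \<Longrightarrow> E y x" and irr: "\<And>x. x \<in> S \<Longrightarrow> \<not> E x x"
    and fin: "finite S"
    and simpl: "\<And>T. T \<subseteq> S \<Longrightarrow> T \<noteq> {} \<Longrightarrow> \<exists>v. simplicial E T v"
  shows "perfect E S"
  unfolding perfect_def chromatic_number_def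
proof (intro allI impI)
  fix T assume "T \<subseteq> S"
  then obtain f where "proper_colouring E T (clique_number E T) f"
    using exists_colouring_clique_number[OF sym irr fin simpl] by blast
  then show "clique_number E T = (LEAST k. \<exists>f. proper_colouring E T k f)"
    using clique_number_le_colours finite_subset[OF \<open>T \<subseteq> S\<close> fin]
    by (intro Least_equality[symmetric]) auto
qed

lemma adj_B_B:
  "adj K N (B a c) (B b d) \<longleftrightarrow> a \<in> {1..K} \<and> b \<in> {1..K} \<and> c \<in> {1..N} \<and> c = d \<and> a \<noteq> b"
  unfolding adj_def gen_edge_def by auto

lemma adj_B_U:
  "adj K N (B a c) (U b d) \<longleftrightarrow>
     a \<in> {1..K} \<and> b \<in> {1..K} \<and> c \<in> {1..N} \<and> d \<in> {1..N} \<and> (a = b \<or> c = d)"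
  unfolding adj_def gen_edge_def by auto

lemma adj_U_B:
  "adj K N (U b d) (B a c) \<longleftrightarrow>
     a \<in> {1..K} \<and> b \<in> {1..K} \<and> c \<in> {1..N} \<and> d \<in> {1..N} \<and> (a = b \<or> c = d)"
  unfolding adj_def gen_edge_def by auto

lemma adj_U_U:
  "adj K N (U a c) (U b d) \<longleftrightarrow>
     a \<in> {1..K} \<and> b \<in> {1..K} \<and> c \<in> {1..N} \<and> d \<in> {1..N} \<and> (a = b \<and> c \<noteq> d \<or> c = d \<and> a \<noteq> b)"
  unfolding adj_def gen_edge_def by auto

lemmas adj_simps = adj_B_B adj_B_U adj_U_B adj_U_U

lemma adj_sym: "adj K N x y \<Longrightarrow> adj K N y x"
  unfolding adj_def by blast

lemma adj_irrefl: "\<not> adj K N x x"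
  by (cases x) (auto simp: adj_simps)

definition B_rows_U_row :: "nat \<Rightarrow> nat \<Rightarrow> nat \<Rightarrow> vtx set" where
  "B_rows_U_row K N i = (\<Union>j\<in>{1..K}. Bset N j) \<union> Uset N i"

lemma B_mem_B_rows_U_row: "B a c \<in> B_rows_U_row K N i \<longleftrightarrow> a \<in> {1..K} \<and> c \<in> {1..N}"
  unfolding B_rows_U_row_def Bset_def Uset_def by auto

lemma U_mem_B_rows_U_row: "U a c \<in> B_rows_U_row K N i \<longleftrightarrow> a = i \<and> c \<in> {1..N}"
  unfolding B_rows_U_row_def Bset_def Uset_def by auto

lemmas mem_B_rows_U_row = B_mem_B_rows_U_row U_mem_B_rows_U_row

lemma finite_B_rows_U_row: "finite (B_rows_U_row K N i)"
proof -
  have "Bset N j = B j ` {1..N}" for j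
    unfolding Bset_def by auto
  moreover have "Uset N i = U i ` {1..N}"
    unfolding Uset_def by auto
  ultimately show ?thesis
    unfolding B_rows_U_row_def by simp
qed

lemma adj_Uset:
  assumes "i \<in> {1..K}" "x \<in> Uset N i" "y \<in> Uset N i" "x \<noteq> y"
  shows "adj K N x y"
  using assms by (auto simp: Uset_def adj_simps)

lemma simplicial_if_neighbours_in_Uset:
  assumes "i \<in> {1..K}" "v \<in> T" "\<And>x. x \<in> T \<Longrightarrow> adj K N v x \<Longrightarrow> x \<in> Uset N i"
  shows "simplicial (adj K N) T v"
  using assms adj_Uset unfolding simplicial_def by blast

lemma off_row_B_simplicial:
  assumes "T \<subseteq> B_rows_U_row K N i" "B j c \<in> T" "j \<noteq> i"
  shows "simplicial (adj K N) T (B j c)"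
  unfolding simplicial_def
proof (intro conjI ballI impI)
  fix x y assume "x \<in> T" "y \<in> T"
    and xy: "x \<noteq> B j c \<and> y \<noteq> B j c \<and> x \<noteq> y \<and> adj K N (B j c) x \<and> adj K N (B j c) y"
  then have "x \<in> B_rows_U_row K N i" "y \<in> B_rows_U_row K N i"
    using assms(1) by auto
  with xy \<open>j \<noteq> i\<close> show "adj K N x y"
    by (cases x; cases y) (auto simp: adj_simps mem_B_rows_U_row)
qed (use assms(2) in simp)

lemma B_rows_U_row_has_simplicial:
  assumes TV: "T \<subseteq> B_rows_U_row K N i" and "T \<noteq> {}" and i: "i \<in> {1..K}"
  shows "\<exists>v. simplicial (adj K N) T v"
proof -
  consider (off_row) j c where "B j c \<in> T" "j \<noteq> i"
    | (in_row) c where "B i c \<in> T" "\<forall>j c. B j c \<in> T \<longrightarrow> j = i"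
    | (no_B) "\<forall>j c. B j c \<notin> T"
    by blast
  then show ?thesis
  proof cases
    case off_row
    then show ?thesis using off_row_B_simplicial[OF TV] by blast
  next
    case in_row
    have "x \<in> Uset N i" if "x \<in> T" "adj K N (B i c) x" for x
    proof (cases x)
      case (U a d)
      with that TV show ?thesis by (auto simp: U_mem_B_rows_U_row Uset_def)
    next
      case (B a d)
      with that in_row(2) show ?thesis by (auto simp: adj_B_B)
    qed
    then show ?thesis
      using simplicial_if_neighbours_in_Uset[OF i in_row(1)] by blast
  next
    case no_B
    obtain v where "v \<in> T" using \<open>T \<noteq> {}\<close> by blast
    have "x \<in> Uset N i" if "x \<in> T" for x
      using that no_B TV by (cases x) (auto simp: U_mem_B_rows_U_row Uset_def)
    then show ?thesis
      using simplicial_if_neighbours_in_Uset[OF i \<open>v \<in> T\<close>] by blast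
  qed
qed

theorem lemma5:
  fixes K N i :: nat
  assumes "i \<in> {1..K}"
  shows "perfect (adj K N) ((\<Union>j\<in>{1..K}. Bset N j) \<union> Uset N i)"
  using perfect_if_simplicial_vertices[OF adj_sym adj_irrefl finite_B_rows_U_row
      B_rows_U_row_has_simplicial[OF _ _ assms]]
  unfolding B_rows_U_row_def .

end
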